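(* Let $\Psi:\{0,1\}^n\times\{0,1\}^n\to\{\mathtt{A},\mathtt{T},\mathtt{C},\mathtt{G}\}^n$ be the map sending $(\mathbf{a},\mathbf{b})$ to $\mathbf{c}=(c_1,\dots,c_n)$ with $c_i=\mathtt{A},\mathtt{T},\mathtt{C},\mathtt{G}$ according as $(a_i,b_i)=(0,0),(0,1),(1,0),(1,1)$ respectively. Let $\mathcal{C}_1,\mathcal{C}_2\subseteq\{0,1\}^n$ be binary codes and let $\mathcal{C}=\{\Psi(\mathbf{a},\mathbf{b}):\mathbf{a}\in\mathcal{C}_1,\mathbf{b}\in\mathcal{C}_2\}$. Then: (1) if $\mathcal{C}_1$ is balanced, then $\mathcal{C}$ is balanced; (2) if $\mathcal{C}_1$ or $\mathcal{C}_2$ is a $\kappa$-WMU code, then $\mathcal{C}$ is a $\kappa$-WMU code; (3) if $d_1,d_2$ are the minimum Hamming distances of $\mathcal{C}_1,\mathcal{C}_2$, then the minimum Hamming distance of $\mathcal{C}$ is at least $\min(d_1,d_2)$; (4) if $\mathcal{C}_2$ is an $f$-APD code, then $\mathcal{C}$ is an $f$-APD code.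
   Context: $\mathbb{F}_2=\{0,1\}$ and $\mathbb{F}_4$ is identified with the DNA alphabet $\{\mathtt{A},\mathtt{T},\mathtt{C},\mathtt{G}\}$. For $\mathbf{a}=(a_1,\dots,a_n)$ write $\mathbf{a}_i^j=(a_i,\dots,a_j)$ if $i\le j$ and $\mathbf{a}_i^j=(a_i,a_{i-1},\dots,a_j)$ if $i>j$. Complement $\bar{\mathbf{a}}$: for binary sequences flip every bit; for DNA sequences apply $\mathtt{A}\leftrightarrow\mathtt{T}$, $\mathtt{C}\leftrightarrow\mathtt{G}$ coordinatewise. A binary sequence of length $n$ is balanced if exactly $n/2$ of its entries are $1$; a DNA sequence of length $n$ is balanced if exactly $n/2$ of its entries lie in $\{\mathtt{G},\mathtt{C}\}$; a code is balanced if all its codewords are. A code $\mathcal{C}\subseteq\mathbb{F}_q^n$ is $\kappa$-WMU ($1\le\kappa<n$) if for all not necessarily distinct $\mathbf{a},\mathbf{b}\in\mathcal{C}$ and all $\kappa\le l<n$, $\mathbf{a}_1^l\ne\mathbf{b}_{n-l+1}^n$. A code $\mathcal{C}\subseteq\mathbb{F}_q^n$ ($q\in\{2,4\}$) is $f$-APD (avoids primer dimers of effective length $f$) if for all not necessarily distinct $\mathbf{a},\mathbf{b}\in\mathcal{C}$ and all $1\le i,j\le n+1-f$ one has $\bar{\mathbf{a}}_i^{f+i-1}\ne\mathbf{b}_j^{f+j-1}$ and $\bar{\mathbf{a}}_i^{f+i-1}\ne\mathbf{b}_{f+j-1}^{j}$. *)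

theory Defs
  imports Main "HOL-Library.Extended_Nat"
begin

text \<open>Binary alphabet F_2 = {0,1} is represented by bool (False = 0, True = 1).
  Sequences of length n are lists of length n, indexed 1..n as in the paper.\<close>

datatype dna = A | T | C | G

text \<open>Subsequence notation a_i^j (1-based): increasing if i <= j, decreasing otherwise.\<close>
definition sub :: "'a list \<Rightarrow> nat \<Rightarrow> nat \<Rightarrow> 'a list" where
  "sub x i j = (if i \<le> j then map (\<lambda>k. x ! (k - 1)) [i..<Suc j]
                else map (\<lambda>k. x ! (k - 1)) (rev [j..<Suc i]))"

definition bin_comp :: "bool list \<Rightarrow> bool list" where
  "bin_comp a = map Not a"

fun dna_comp1 :: "dna \<Rightarrow> dna" where
  "dna_comp1 A = T" | "dna_comp1 T = A" | "dna_comp1 C = G" | "dna_comp1 G = C"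

definition dna_comp :: "dna list \<Rightarrow> dna list" where
  "dna_comp a = map dna_comp1 a"

fun psi1 :: "bool \<Rightarrow> bool \<Rightarrow> dna" where
  "psi1 False False = A" | "psi1 False True = T" | "psi1 True False = C" | "psi1 True True = G"

definition psi :: "bool list \<Rightarrow> bool list \<Rightarrow> dna list" where
  "psi a b = map2 psi1 a b"

definition balanced_bin_code :: "bool list set \<Rightarrow> bool" where
  "balanced_bin_code Cd = (\<forall>a\<in>Cd. 2 * length (filter (\<lambda>x. x) a) = length a)"

definition balanced_dna_code :: "dna list set \<Rightarrow> bool" where
  "balanced_dna_code Cd = (\<forall>a\<in>Cd. 2 * length (filter (\<lambda>x. x = G \<or> x = C) a) = length a)"

definition wmu :: "nat \<Rightarrow> nat \<Rightarrow> 'a list set \<Rightarrow> bool" where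
  "wmu n \<kappa> Cd = (1 \<le> \<kappa> \<and> \<kappa> < n \<and>
     (\<forall>a\<in>Cd. \<forall>b\<in>Cd. \<forall>l. \<kappa> \<le> l \<and> l < n \<longrightarrow> sub a 1 l \<noteq> sub b (n - l + 1) n))"

definition apd :: "('a list \<Rightarrow> 'a list) \<Rightarrow> nat \<Rightarrow> nat \<Rightarrow> 'a list set \<Rightarrow> bool" where
  "apd cmp n f Cd = (\<forall>a\<in>Cd. \<forall>b\<in>Cd. \<forall>i j. 1 \<le> i \<and> i \<le> n + 1 - f \<and> 1 \<le> j \<and> j \<le> n + 1 - f \<longrightarrow>
       sub (cmp a) i (f + i - 1) \<noteq> sub b j (f + j - 1) \<and>
       sub (cmp a) i (f + i - 1) \<noteq> sub b (f + j - 1) j)"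

definition hamming :: "'a list \<Rightarrow> 'a list \<Rightarrow> nat" where
  "hamming a b = card {i. i < length a \<and> a ! i \<noteq> b ! i}"

text \<open>Minimum Hamming distance; by convention infinity if the code has fewer than two words.\<close>
definition min_dist :: "'a list set \<Rightarrow> enat" where
  "min_dist Cd = (INF p \<in> {(a, b). a \<in> Cd \<and> b \<in> Cd \<and> a \<noteq> b}. enat (hamming (fst p) (snd p)))"

end

theory Submission
  imports Defs
begin

text \<open>Reading a DNA symbol back as the pair of bits it encodes turns every word of
  the composite code letterwise into a word of each binary code. Equal prefixes,
  suffixes and windows stay equal under such a letterwise map, and distinct DNA words
  differ in one of the two projections, at no more positions than they differ
  themselves. The GC content of a word is the weight of its first projection, and
  complementation flips only the second bit.\<close>

fun dna_fst :: "dna \<Rightarrow> bool" where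
  "dna_fst A = False" | "dna_fst T = False" | "dna_fst C = True" | "dna_fst G = True"

fun dna_snd :: "dna \<Rightarrow> bool" where
  "dna_snd A = False" | "dna_snd T = True" | "dna_snd C = False" | "dna_snd G = True"

lemma dna_fst_psi1 [simp]: "dna_fst (psi1 x y) = x"
  by (cases x; cases y) auto

lemma dna_snd_psi1 [simp]: "dna_snd (psi1 x y) = y"
  by (cases x; cases y) auto

lemma dna_fst_iff_GC: "dna_fst d \<longleftrightarrow> d = G \<or> d = C"
  by (cases d) auto

lemma dna_snd_dna_comp1: "dna_snd (dna_comp1 d) = Not (dna_snd d)"
  by (cases d) auto

lemma dna_eq_iff_fst_snd: "d = d' \<longleftrightarrow> dna_fst d = dna_fst d' \<and> dna_snd d = dna_snd d'"
  by (cases d; cases d') auto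

lemma map_dna_fst_psi: "length a = length b \<Longrightarrow> map dna_fst (psi a b) = a"
  by (induction a b rule: list_induct2) (auto simp: psi_def)

lemma map_dna_snd_psi: "length a = length b \<Longrightarrow> map dna_snd (psi a b) = b"
  by (induction a b rule: list_induct2) (auto simp: psi_def)

lemma map_sub:
  "1 \<le> i \<Longrightarrow> 1 \<le> j \<Longrightarrow> i \<le> length x \<Longrightarrow> j \<le> length x \<Longrightarrow>
    map g (sub x i j) = sub (map g x) i j"
  unfolding sub_def by (auto intro!: map_cong)

lemma hamming_map_le:
  "length a = length b \<Longrightarrow> hamming (map g a) (map g b) \<le> hamming a b"
  unfolding hamming_def by (intro card_mono) auto

lemma min_dist_le_hamming: "a \<in> D \<Longrightarrow> b \<in> D \<Longrightarrow> a \<noteq> b \<Longrightarrow> min_dist D \<le> hamming a b"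
  unfolding min_dist_def by (rule INF_lower2[of "(a, b)"]) auto

lemma balanced_dna_code_if_map_dna_fst:
  assumes "balanced_bin_code D" and "map dna_fst ` Cd \<subseteq> D"
  shows "balanced_dna_code Cd"
proof -
  have "length (filter (\<lambda>x. x = G \<or> x = C) c) = length (filter (\<lambda>x. x) (map dna_fst c))" for c
    by (simp add: filter_map length_filter_map dna_fst_iff_GC comp_def)
  with assms show ?thesis
    unfolding balanced_bin_code_def balanced_dna_code_def by force
qed

lemma wmu_if_wmu_map_image:
  assumes "wmu n \<kappa> D" and "map g ` Cd \<subseteq> D" and "\<forall>c\<in>Cd. length c = n"
  shows "wmu n \<kappa> Cd"
  unfolding wmu_def
proof (intro conjI ballI allI impI notI)
  show "1 \<le> \<kappa>" "\<kappa> < n" using assms(1) unfolding wmu_def by auto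
next
  fix c c' l
  assume c: "c \<in> Cd" "c' \<in> Cd" and l: "\<kappa> \<le> l \<and> l < n"
    and eq: "sub c 1 l = sub c' (n - l + 1) n"
  have "1 \<le> l" using assms(1) l unfolding wmu_def by auto
  have "map g (sub c 1 l) = sub (map g c) 1 l" "map g (sub c' (n - l + 1) n) = sub (map g c') (n - l + 1) n"
    using c l assms(3) \<open>1 \<le> l\<close> by (auto intro: map_sub)
  then have "sub (map g c) 1 l = sub (map g c') (n - l + 1) n"
    using eq by metis
  then show False
    using assms(1,2) c l unfolding wmu_def by blast
qed

lemma apd_if_apd_map_image:
  assumes "apd (map h') n f D" and "map g ` Cd \<subseteq> D" and "\<forall>c\<in>Cd. length c = n"
    and "g \<circ> h = h' \<circ> g" and "1 \<le> f"
  shows "apd (map h) n f Cd"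
  unfolding apd_def
proof (intro ballI allI impI conjI notI)
  fix c c' i j
  assume c: "c \<in> Cd" "c' \<in> Cd" and ij: "1 \<le> i \<and> i \<le> n + 1 - f \<and> 1 \<le> j \<and> j \<le> n + 1 - f"
  have bounds: "f + i - 1 \<le> n" "f + j - 1 \<le> n" "1 \<le> f + i - 1" "1 \<le> f + j - 1" "i \<le> n" "j \<le> n"
    using ij assms(5) by auto
  have "map g (map h c) = map h' (map g c)"
    by (simp add: assms(4) flip: comp_assoc)
  then have window: "map g (sub (map h c) i (f + i - 1)) = sub (map h' (map g c)) i (f + i - 1)"
    using bounds c assms(3) by (metis map_sub length_map ij)
  have reads: "map g (sub c' j (f + j - 1)) = sub (map g c') j (f + j - 1)"
    "map g (sub c' (f + j - 1) j) = sub (map g c') (f + j - 1) j"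
    using bounds c assms(3) ij by (auto intro: map_sub)
  have far: "sub (map h' (map g c)) i (f + i - 1) \<noteq> sub (map g c') j (f + j - 1)"
    "sub (map h' (map g c)) i (f + i - 1) \<noteq> sub (map g c') (f + j - 1) j"
    using assms(1,2) c ij unfolding apd_def by blast+
  show False if "sub (map h c) i (f + i - 1) = sub c' j (f + j - 1)"
    using arg_cong[OF that, of "map g"] far(1) window reads(1) by simp
  show False if "sub (map h c) i (f + i - 1) = sub c' (f + j - 1) j"
    using arg_cong[OF that, of "map g"] far(2) window reads(2) by simp
qed

lemma min_dist_ge_min_of_projections:
  assumes "map g1 ` Cd \<subseteq> D1" and "map g2 ` Cd \<subseteq> D2" and "\<forall>c\<in>Cd. length c = n"
    and "\<And>d d'. g1 d = g1 d' \<Longrightarrow> g2 d = g2 d' \<Longrightarrow> d = d'"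
  shows "min (min_dist D1) (min_dist D2) \<le> min_dist Cd"
  unfolding min_dist_def [of Cd]
proof (rule INF_greatest, clarsimp)
  fix c c' assume c: "c \<in> Cd" "c' \<in> Cd" "c \<noteq> c'"
  have len: "length c = length c'" using assms(3) c by simp
  have "map g1 c \<noteq> map g1 c' \<or> map g2 c \<noteq> map g2 c'"
    using c(3) len assms(4) by (metis list_eq_iff_nth_eq length_map nth_map)
  then show "min (min_dist D1) (min_dist D2) \<le> enat (hamming c c')"
  proof
    assume "map g1 c \<noteq> map g1 c'"
    then have "min_dist D1 \<le> hamming (map g1 c) (map g1 c')"
      using assms(1) c by (intro min_dist_le_hamming) auto
    also have "\<dots> \<le> hamming c c'" using hamming_map_le[OF len] by simp
    finally show ?thesis by (rule min.coboundedI1)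
  next
    assume "map g2 c \<noteq> map g2 c'"
    then have "min_dist D2 \<le> hamming (map g2 c) (map g2 c')"
      using assms(2) c by (intro min_dist_le_hamming) auto
    also have "\<dots> \<le> hamming c c'" using hamming_map_le[OF len] by simp
    finally show ?thesis by (rule min.coboundedI2)
  qed
qed

theorem lemma2:
  fixes n :: nat and C1 C2 :: "bool list set" and Cd :: "dna list set"
  assumes "\<forall>a\<in>C1. length a = n"
    and "\<forall>b\<in>C2. length b = n"
    and "Cd = {psi a b | a b. a \<in> C1 \<and> b \<in> C2}"
  shows "(balanced_bin_code C1 \<longrightarrow> balanced_dna_code Cd)
       \<and> (\<forall>\<kappa>. wmu n \<kappa> C1 \<or> wmu n \<kappa> C2 \<longrightarrow> wmu n \<kappa> Cd)
       \<and> min (min_dist C1) (min_dist C2) \<le> min_dist Cd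
       \<and> (\<forall>f. 1 \<le> f \<longrightarrow> apd bin_comp n f C2 \<longrightarrow> apd dna_comp n f Cd)"
proof -
  have len: "\<forall>c\<in>Cd. length c = n" using assms by (auto simp: psi_def)
  have fst_image: "map dna_fst ` Cd \<subseteq> C1" using assms by (auto simp: map_dna_fst_psi)
  have snd_image: "map dna_snd ` Cd \<subseteq> C2" using assms by (auto simp: map_dna_snd_psi)
  have comp_commute: "dna_snd \<circ> dna_comp1 = Not \<circ> dna_snd"
    by (auto simp: dna_snd_dna_comp1)
  have comp_maps: "bin_comp = map Not" "dna_comp = map dna_comp1"
    by (auto simp: bin_comp_def dna_comp_def)
  show ?thesis
    using balanced_dna_code_if_map_dna_fst[OF _ fst_image]
      wmu_if_wmu_map_image[OF _ fst_image len] wmu_if_wmu_map_image[OF _ snd_image len]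
      min_dist_ge_min_of_projections[OF fst_image snd_image len]
      apd_if_apd_map_image[OF _ snd_image len comp_commute]
    by (auto simp: comp_maps dna_eq_iff_fst_snd)
qed

end
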